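(* The functor $X:\mathsf{ComRings}\to\mathsf{Ab}$, with the endomorphism $V$ and map $\langle\ \rangle$ described below, is a pre-Witt functor.
   Context: $\mathsf{ComRings}$ is the category of commutative rings with unity; $p$ is a fixed prime. For $R$ commutative, $R^{\mathbb N_0}$ carries the product topology; $V(r_0,r_1,\dots)=p(0,r_0,r_1,\dots)$, $\langle r\rangle=(r,r^p,r^{p^2},\dots)$, and $X(R)$ is the closed subgroup of $R^{\mathbb N_0}$ generated by $\{V^n\langle r\rangle\mid n\in\mathbb N_0, r\in R\}$, with $V$ and $\langle\ \rangle:R\to X(R)$ induced. A pre-Witt functor is a functor $F:\mathsf{ComRings}\to\mathsf{Ab}$ with functorial group endomorphisms $V:F(R)\to F(R)$ and functorial set maps $\langle\ \rangle:R\to F(R)$ such that: (1) $\langle 0\rangle=0$, and if $p\ne2$ then $\langle -x\rangle=-\langle x\rangle$; (2) $x\mapsto V\langle x^p\rangle-p\langle x\rangle$ is additive $R\to F(R)$; (3) $F(R)$ is complete with respect to the filtration $\{V^nF(R)\}_{n\ge0}$; (4) if $A$ is $p$-torsion free then $F(A)$ is $p$-torsion free. *)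

theory Defs
  imports "HOL-Analysis.Analysis"
begin

text \<open>Elements of R^N_0 are functions nat => R; group structure is pointwise.
  R carries the discrete topology, R^N_0 the product topology.\<close>

definition prodtop :: "(nat \<Rightarrow> 'a) topology" where
  "prodtop = product_topology (\<lambda>_. discrete_topology UNIV) UNIV"

definition Vop :: "nat \<Rightarrow> (nat \<Rightarrow> 'a::comm_ring_1) \<Rightarrow> (nat \<Rightarrow> 'a)" where
  "Vop p x = (\<lambda>i. if i = 0 then 0 else of_nat p * x (i - 1))"

definition teich :: "nat \<Rightarrow> 'a::comm_ring_1 \<Rightarrow> (nat \<Rightarrow> 'a)" where
  "teich p r = (\<lambda>i. r ^ (p ^ i))"

definition add_subgroup :: "(nat \<Rightarrow> 'a::comm_ring_1) set \<Rightarrow> bool" where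
  "add_subgroup H \<longleftrightarrow> (\<lambda>i. 0) \<in> H \<and> (\<forall>g\<in>H. \<forall>h\<in>H. (\<lambda>i. g i + h i) \<in> H)
     \<and> (\<forall>g\<in>H. (\<lambda>i. - g i) \<in> H)"

definition Xfun :: "nat \<Rightarrow> (nat \<Rightarrow> 'a::comm_ring_1) set" where
  "Xfun p = \<Inter>{H. add_subgroup H \<and> closedin prodtop H \<and>
                  (\<forall>n r. (Vop p ^^ n) (teich p r) \<in> H)}"

definition Xfil :: "nat \<Rightarrow> nat \<Rightarrow> (nat \<Rightarrow> 'a::comm_ring_1) set" where
  "Xfil p n = (Vop p ^^ n) ` Xfun p"

definition is_ring_hom :: "('a::comm_ring_1 \<Rightarrow> 'b::comm_ring_1) \<Rightarrow> bool" where
  "is_ring_hom f \<longleftrightarrow> f 0 = 0 \<and> f 1 = 1 \<and> (\<forall>x y. f (x + y) = f x + f y)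
     \<and> (\<forall>x y. f (x * y) = f x * f y)"

end

theory Submission
  imports Defs
begin

text \<open>
  X(R) is the least closed additive subgroup of R^N containing the generators V^n<r>. Hence
  an additive, continuous map sends X(R) into X(S) as soon as it sends generators to
  generators; this applies to V and to every coordinatewise ring homomorphism. Axioms (1),
  (2) and (4) are coordinatewise identities. For (3), the key fact is that V^n shifts a
  sequence by n places and multiplies it by p^n, so V^n X(R) consists of sequences vanishing
  below coordinate n. A Cauchy sequence a_n for the filtration is therefore eventually constant
  in each coordinate, and its coordinatewise limit b differs from a_n by V^n applied to the
  series of the V^j c_(n+j), where V^m c_m = a_(m+1) - a_m; this series converges
  coordinatewise and so lies in the closed set X(R).
\<close>

lemma topspace_prodtop [simp]: "topspace prodtop = UNIV"
  unfolding prodtop_def by (simp add: PiE_UNIV_domain)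

lemma continuous_map_prodtop_coordinatewise:
  "continuous_map prodtop prodtop (\<lambda>x i. h i (x (\<sigma> i)))"
  unfolding prodtop_def continuous_map_componentwise_UNIV
proof
  fix k
  show "continuous_map (product_topology (\<lambda>_. discrete_topology UNIV) UNIV) (discrete_topology UNIV)
          (\<lambda>x. h k (x (\<sigma> k)))"
    using continuous_map_compose[OF continuous_map_product_projection[of "\<sigma> k" UNIV "\<lambda>_. discrete_topology UNIV"],
        of "discrete_topology UNIV" "h k"]
    by (simp add: o_def)
qed

lemma closedin_prodtop_coordinatewise_limit:
  fixes a :: "nat \<Rightarrow> nat \<Rightarrow> 'a"
  assumes "closedin prodtop H" "\<And>m. a m \<in> H" "\<And>i. \<exists>N. \<forall>m\<ge>N. a m i = b i"
  shows "b \<in> H"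
proof (rule limitin_closedin[OF _ assms(1)])
  show "limitin prodtop a b sequentially"
    unfolding prodtop_def limitin_componentwise
  proof (intro conjI ballI)
    fix i
    obtain N where "\<forall>m\<ge>N. a m i = b i" using assms(3) by blast
    then show "limitin (discrete_topology UNIV) (\<lambda>m. a m i) (b i) sequentially"
      unfolding limitin_def by (auto simp: eventually_sequentially) metis
  qed (auto simp: PiE_UNIV_domain)
qed (use assms in auto)

lemma Xfun_minimal:
  assumes "add_subgroup H" "closedin prodtop H" "\<And>n r. (Vop p ^^ n) (teich p r) \<in> H"
  shows "Xfun p \<subseteq> H"
  unfolding Xfun_def using assms by blast

lemma Xfun_generator: "(Vop p ^^ n) (teich p r) \<in> Xfun p"
  unfolding Xfun_def by blast

lemma teich_in_Xfun: "teich p r \<in> Xfun p"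
  using Xfun_generator[where n=0] by simp

lemma closedin_Xfun: "closedin prodtop (Xfun p)"
  unfolding Xfun_def
  using closedin_topspace[of prodtop]
  by (intro closedin_Inter) (auto intro!: exI[of _ UNIV] simp: add_subgroup_def)

lemma add_subgroup_Xfun: "add_subgroup (Xfun p)"
  unfolding Xfun_def add_subgroup_def by blast

lemma Xfun_zero: "(\<lambda>i. 0) \<in> Xfun p"
  and Xfun_add: "x \<in> Xfun p \<Longrightarrow> y \<in> Xfun p \<Longrightarrow> (\<lambda>i. x i + y i) \<in> Xfun p"
  and Xfun_uminus: "x \<in> Xfun p \<Longrightarrow> (\<lambda>i. - x i) \<in> Xfun p"
  using add_subgroup_Xfun unfolding add_subgroup_def by blast+

lemma Xfun_sum:
  assumes "finite S" "\<And>j. j \<in> S \<Longrightarrow> x j \<in> Xfun p"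
  shows "(\<lambda>i. \<Sum>j\<in>S. x j i) \<in> Xfun p"
  using assms by (induction S rule: finite_induct) (auto intro: Xfun_zero Xfun_add)

lemma Xfun_map:
  fixes g :: "(nat \<Rightarrow> 'a::comm_ring_1) \<Rightarrow> (nat \<Rightarrow> 'b::comm_ring_1)"
  assumes cont: "continuous_map prodtop prodtop g"
    and add: "\<And>x y. g (\<lambda>i. x i + y i) = (\<lambda>i. g x i + g y i)"
    and gen: "\<And>n r. g ((Vop p ^^ n) (teich p r)) \<in> Xfun p"
    and x: "x \<in> Xfun p"
  shows "g x \<in> Xfun p"
proof -
  have zero: "g (\<lambda>i. 0) = (\<lambda>i. 0)"
    using add[of "\<lambda>i. 0" "\<lambda>i. 0"] by (simp add: fun_eq_iff)
  have uminus: "g (\<lambda>i. - y i) = (\<lambda>i. - g y i)" for y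
    using add[of y "\<lambda>i. - y i"] by (simp add: zero fun_eq_iff add_eq_0_iff)
  have "Xfun p \<subseteq> {y. g y \<in> Xfun p}"
  proof (rule Xfun_minimal)
    show "add_subgroup {y. g y \<in> Xfun p}"
      unfolding add_subgroup_def by (simp add: zero uminus add Xfun_zero Xfun_add Xfun_uminus)
    show "closedin prodtop {y. g y \<in> Xfun p}"
      using closedin_continuous_map_preimage[OF cont closedin_Xfun] by simp
  qed (simp add: gen)
  with x show ?thesis by blast
qed

lemma Vop_add: "Vop p (\<lambda>i. x i + y i) = (\<lambda>i. Vop p x i + Vop p y i)"
  by (auto simp: Vop_def distrib_left)

lemma funpow_Vop_apply:
  "(Vop p ^^ n) x i = (if i < n then 0 else of_nat p ^ n * x (i - n))"
proof (induction n arbitrary: i)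
  case (Suc n)
  then show ?case by (cases i) (auto simp: Vop_def)
qed simp

lemma Vop_Xfun:
  assumes "x \<in> Xfun p" shows "Vop p x \<in> Xfun p"
proof (rule Xfun_map[OF _ Vop_add _ assms])
  show "continuous_map prodtop prodtop (Vop p :: (nat \<Rightarrow> 'a) \<Rightarrow> _)"
    using continuous_map_prodtop_coordinatewise[of "\<lambda>i y. if i = 0 then 0 else of_nat p * y" "\<lambda>i. i - 1"]
    by (simp add: Vop_def[abs_def])
  show "Vop p ((Vop p ^^ n) (teich p r)) \<in> Xfun p" for n r
    using Xfun_generator[where n="Suc n"] by simp
qed

lemma funpow_Vop_Xfun: "x \<in> Xfun p \<Longrightarrow> (Vop p ^^ n) x \<in> Xfun p"
  by (induction n) (auto intro: Vop_Xfun)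

lemma ring_hom_of_nat: "is_ring_hom f \<Longrightarrow> f (of_nat n) = of_nat n"
  unfolding is_ring_hom_def by (induction n) auto

lemma ring_hom_power: "is_ring_hom f \<Longrightarrow> f (x ^ n) = f x ^ n"
  unfolding is_ring_hom_def by (induction n) auto

lemma ring_hom_Vop: "is_ring_hom f \<Longrightarrow> (\<lambda>i. f (Vop p x i)) = Vop p (\<lambda>i. f (x i))"
  by (auto simp: Vop_def ring_hom_of_nat is_ring_hom_def)

lemma ring_hom_funpow_Vop:
  "is_ring_hom f \<Longrightarrow> (\<lambda>i. f ((Vop p ^^ n) x i)) = (Vop p ^^ n) (\<lambda>i. f (x i))"
  by (induction n) (simp_all add: ring_hom_Vop)

lemma ring_hom_teich: "is_ring_hom f \<Longrightarrow> (\<lambda>i. f (teich p r i)) = teich p (f r)"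
  by (simp add: teich_def ring_hom_power)

lemma ring_hom_Xfun:
  fixes f :: "'a::comm_ring_1 \<Rightarrow> 'b::comm_ring_1"
  assumes f: "is_ring_hom f" and x: "x \<in> Xfun p"
  shows "(\<lambda>i. f (x i)) \<in> (Xfun p :: (nat \<Rightarrow> 'b) set)"
proof (rule Xfun_map[where g="\<lambda>x i. f (x i)", OF _ _ _ x])
  show "continuous_map prodtop prodtop (\<lambda>x i. f (x i))"
    using continuous_map_prodtop_coordinatewise[of "\<lambda>_. f" id] by simp
  show "(\<lambda>i. f (x i + y i)) = (\<lambda>i. f (x i) + f (y i))" for x y
    using f by (simp add: is_ring_hom_def)
  show "(\<lambda>i. f ((Vop p ^^ n) (teich p r) i)) \<in> Xfun p" for n r
    using Xfun_generator[where n=n and r="f r"]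
    by (simp add: ring_hom_funpow_Vop[OF f] ring_hom_teich[OF f])
qed

lemma teich_zero: "p > 0 \<Longrightarrow> teich p 0 = (\<lambda>i. 0)"
  by (simp add: teich_def power_0_left)

lemma teich_uminus: "odd p \<Longrightarrow> teich p (- x) = (\<lambda>i. - teich p x i)"
  by (simp add: teich_def)

lemma Vop_teich_power_diff_add:
  "(\<lambda>i. Vop p (teich p ((x + y) ^ p)) i - of_nat p * teich p (x + y) i)
   = (\<lambda>i. (Vop p (teich p (x ^ p)) i - of_nat p * teich p x i)
        + (Vop p (teich p (y ^ p)) i - of_nat p * teich p y i))"
proof -
  have "(z ^ p) ^ (p ^ (i - 1)) = z ^ p ^ i" if "i > 0" for z :: 'a and i
    using that by (simp add: power_mult[symmetric] power_Suc[symmetric])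
  then show ?thesis
    by (auto simp: fun_eq_iff Vop_def teich_def algebra_simps)
qed

lemma Xfil_apply_below: "x \<in> Xfil p n \<Longrightarrow> i < n \<Longrightarrow> x i = 0"
  unfolding Xfil_def by (auto simp: funpow_Vop_apply)

lemma Xfil_Inter: "(\<Inter>n. Xfil p n) = {\<lambda>i. 0}"
proof -
  have "(\<lambda>i. 0) \<in> Xfil p n" for n
    unfolding Xfil_def using Xfun_zero
    by (rule rev_image_eqI) (simp add: funpow_Vop_apply fun_eq_iff)
  moreover have "x = (\<lambda>i. 0)" if "\<forall>n. x \<in> Xfil p n" for x :: "nat \<Rightarrow> 'a"
    using that Xfil_apply_below[of x p "Suc i" i for i] by (simp add: fun_eq_iff)
  ultimately show ?thesis by blast
qed

text \<open>The j-th summand vanishes below coordinate j, so in each coordinate the infinite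
  series of the V^j c_j reduces to this finite sum.\<close>

definition Vop_series :: "nat \<Rightarrow> (nat \<Rightarrow> nat \<Rightarrow> 'a::comm_ring_1) \<Rightarrow> nat \<Rightarrow> 'a" where
  "Vop_series p c = (\<lambda>i. \<Sum>j\<le>i. (Vop p ^^ j) (c j) i)"

lemma Vop_series_Xfun:
  assumes "\<And>j. c j \<in> Xfun p"
  shows "Vop_series p c \<in> Xfun p"
proof (rule closedin_prodtop_coordinatewise_limit[OF closedin_Xfun])
  show "(\<lambda>i. \<Sum>j<m. (Vop p ^^ j) (c j) i) \<in> Xfun p" for m
    by (rule Xfun_sum) (auto intro: funpow_Vop_Xfun assms)
  show "\<exists>N. \<forall>m\<ge>N. (\<Sum>j<m. (Vop p ^^ j) (c j) i) = Vop_series p c i" for i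
  proof (intro exI allI impI)
    fix m assume "Suc i \<le> m"
    then show "(\<Sum>j<m. (Vop p ^^ j) (c j) i) = Vop_series p c i"
      unfolding Vop_series_def
      by (intro sum.mono_neutral_right) (auto simp: funpow_Vop_apply)
  qed
qed

lemma funpow_Vop_series:
  "(Vop p ^^ n) (Vop_series p (\<lambda>j. c (n + j))) i = (\<Sum>m=n..i. (Vop p ^^ m) (c m) i)"
proof (cases "i < n")
  case False
  then obtain k where i: "i = k + n" by (metis add.commute le_iff_add not_less)
  have "(Vop p ^^ n) (Vop_series p (\<lambda>j. c (n + j))) i
      = (\<Sum>j\<le>k. of_nat p ^ n * (of_nat p ^ j * c (n + j) (k - j)))"
    by (simp add: i funpow_Vop_apply Vop_series_def sum_distrib_left)
  also have "\<dots> = (\<Sum>j=0..k. (Vop p ^^ (j + n)) (c (j + n)) (k + n))"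
    by (intro sum.cong) (auto simp: funpow_Vop_apply power_add ac_simps)
  also have "\<dots> = (\<Sum>m=n..i. (Vop p ^^ m) (c m) i)"
    using sum.shift_bounds_cl_nat_ivl[of "\<lambda>m. (Vop p ^^ m) (c m) i" 0 n k] by (simp add: i)
  finally show ?thesis .
qed (simp add: funpow_Vop_apply)

lemma Xfil_complete:
  fixes a :: "nat \<Rightarrow> nat \<Rightarrow> 'a::comm_ring_1"
  assumes a: "\<And>n. a n \<in> Xfun p" and d: "\<And>n. (\<lambda>i. a (Suc n) i - a n i) \<in> Xfil p n"
  shows "\<exists>b\<in>Xfun p. \<forall>n. (\<lambda>i. b i - a n i) \<in> Xfil p n"
proof -
  have "\<forall>m. \<exists>y. y \<in> Xfun p \<and> (Vop p ^^ m) y = (\<lambda>i. a (Suc m) i - a m i)"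
    using d unfolding Xfil_def image_def by (simp add: eq_commute Bex_def)
  then obtain c where c: "\<And>m. c m \<in> Xfun p"
    "\<And>m. (Vop p ^^ m) (c m) = (\<lambda>i. a (Suc m) i - a m i)"
    by (metis choice)
  have stable: "a m i = a (Suc i) i" if "Suc i \<le> m" for i m
    using that
  proof (induction m rule: dec_induct)
    case (step m)
    then show ?case using Xfil_apply_below[OF d, of i m] by simp
  qed simp
  \<comment> \<open>by stable, b is the coordinatewise limit of the a_m\<close>
  define b where "b i = a (Suc i) i" for i
  have b_diff: "(\<lambda>i. b i - a n i) = (Vop p ^^ n) (Vop_series p (\<lambda>j. c (n + j)))" for n
  proof
    fix i
    have "(Vop p ^^ n) (Vop_series p (\<lambda>j. c (n + j))) i = (\<Sum>m=n..i. a (Suc m) i - a m i)"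
      by (simp add: funpow_Vop_series c(2))
    also have "\<dots> = b i - a n i"
    proof (cases "n \<le> Suc i")
      case True
      then show ?thesis using sum_Suc_diff[of n i "\<lambda>m. a m i"] by (simp add: b_def)
    next
      case False
      then show ?thesis using stable[of i n] by (simp add: b_def)
    qed
    finally show "b i - a n i = (Vop p ^^ n) (Vop_series p (\<lambda>j. c (n + j))) i" ..
  qed
  have series: "Vop_series p (\<lambda>j. c (n + j)) \<in> Xfun p" for n
    by (rule Vop_series_Xfun) (rule c(1))
  have "(\<lambda>i. b i - a 0 i) \<in> Xfun p"
    using b_diff[of 0] series[of 0] by simp
  from Xfun_add[OF this a[of 0]] have "b \<in> Xfun p"
    by simp
  moreover have "(\<lambda>i. b i - a n i) \<in> Xfil p n" for n
    unfolding Xfil_def b_diff using series by (rule imageI)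
  ultimately show ?thesis by blast
qed

theorem lemma2p4:
  fixes p :: nat and f :: "'a::comm_ring_1 \<Rightarrow> 'b::comm_ring_1"
  assumes "prime p"
  shows
    \<comment> \<open>X(R) is an abelian group (pointwise), V a group endomorphism, <> lands in X(R)\<close>
    "add_subgroup (Xfun p :: (nat \<Rightarrow> 'a) set)
     \<and> (\<forall>x\<in>(Xfun p :: (nat \<Rightarrow> 'a) set). Vop p x \<in> Xfun p)
     \<and> (\<forall>x\<in>(Xfun p :: (nat \<Rightarrow> 'a) set). \<forall>y\<in>Xfun p.
           Vop p (\<lambda>i. x i + y i) = (\<lambda>i. Vop p x i + Vop p y i))
     \<and> (\<forall>r::'a. teich p r \<in> Xfun p)
     \<comment> \<open>functoriality: a ring hom f induces a group hom X(f) commuting with V and <>\<close>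
     \<and> (is_ring_hom f \<longrightarrow>
          (\<forall>x\<in>(Xfun p :: (nat \<Rightarrow> 'a) set). (\<lambda>i. f (x i)) \<in> (Xfun p :: (nat \<Rightarrow> 'b) set))
        \<and> (\<forall>x\<in>(Xfun p :: (nat \<Rightarrow> 'a) set). \<forall>y\<in>Xfun p.
              (\<lambda>i. f (x i + y i)) = (\<lambda>i. f (x i) + f (y i)))
        \<and> (\<forall>x\<in>(Xfun p :: (nat \<Rightarrow> 'a) set). (\<lambda>i. f (Vop p x i)) = Vop p (\<lambda>i. f (x i)))
        \<and> (\<forall>r::'a. (\<lambda>i. f (teich p r i)) = teich p (f r)))
     \<comment> \<open>(1)\<close>
     \<and> teich p (0::'a) = (\<lambda>i. 0)
     \<and> (p \<noteq> 2 \<longrightarrow> (\<forall>x::'a. teich p (- x) = (\<lambda>i. - teich p x i)))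
     \<comment> \<open>(2)\<close>
     \<and> (\<forall>x y::'a.
          (\<lambda>i. Vop p (teich p ((x + y) ^ p)) i - of_nat p * teich p (x + y) i)
        = (\<lambda>i. (Vop p (teich p (x ^ p)) i - of_nat p * teich p x i)
             + (Vop p (teich p (y ^ p)) i - of_nat p * teich p y i)))
     \<comment> \<open>(3) completeness (separated and complete) w.r.t. the filtration V^n X(R)\<close>
     \<and> (\<Inter>n. Xfil p n) = {(\<lambda>i. 0::'a)}
     \<and> (\<forall>a :: nat \<Rightarrow> nat \<Rightarrow> 'a.
          (\<forall>n. a n \<in> Xfun p) \<and> (\<forall>n. (\<lambda>i. a (Suc n) i - a n i) \<in> Xfil p n)
          \<longrightarrow> (\<exists>b\<in>Xfun p. \<forall>n. (\<lambda>i. b i - a n i) \<in> Xfil p n))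
     \<comment> \<open>(4)\<close>
     \<and> ((\<forall>r::'a. of_nat p * r = 0 \<longrightarrow> r = 0) \<longrightarrow>
          (\<forall>x\<in>(Xfun p :: (nat \<Rightarrow> 'a) set). (\<lambda>i. of_nat p * x i) = (\<lambda>i. 0) \<longrightarrow> x = (\<lambda>i. 0)))"
proof -
  have "p > 0"
    using assms by (rule prime_gt_0_nat)
  have odd: "odd p" if "p \<noteq> 2"
    using assms prime_ge_2_nat[OF assms] that by (intro prime_odd_nat) auto
  have hom_add: "is_ring_hom f \<Longrightarrow> (\<lambda>i. f (x i + y i)) = (\<lambda>i. f (x i) + f (y i))" for x y
    by (simp add: is_ring_hom_def)
  show ?thesis
    by (intro conjI ballI allI impI)
      (simp_all add: add_subgroup_Xfun Vop_Xfun Vop_add teich_in_Xfun ring_hom_Xfun ring_hom_Vop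
        ring_hom_teich hom_add teich_zero[OF \<open>p > 0\<close>] teich_uminus[OF odd]
        Vop_teich_power_diff_add Xfil_Inter Xfil_complete fun_eq_iff)
qed

end
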